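(* Let $\mathrm{S}$ be an associative semicopula (i.e. $\mathrm{S}(\mathrm{S}(x,y),z)=\mathrm{S}(x,\mathrm{S}(y,z))$ for all $x,y,z\in[0,1]$) such that for every $a\in(0,1)$ the function $x\mapsto\mathrm{S}(a,x)$ on $[0,1]$ is strictly increasing and left-continuous, and its discontinuity points are isolated in the sense that for every discontinuity point $z$ of $x\mapsto\mathrm{S}(a,x)$ there is $\varepsilon>0$ such that $x\mapsto\mathrm{S}(a,x)$ is continuous on $(z,z+\varepsilon)$. Then for every measurable space $(X,\mathcal{A})$, every capacity $\mu$ on $\mathcal{A}$ that is continuous from below, every $\mathcal{A}$-measurable $f\colon X\to[0,1]$ and every $a\in[0,1]$, $$\mathbf{I}_{\mathrm{S}}\big(\mu,\mathrm{S}(a,f)\big)=\mathrm{S}\big(a,\mathbf{I}_{\mathrm{S}}(\mu,f)\big),$$ where $\mathrm{S}(a,f)$ denotes the function $x\mapsto\mathrm{S}(a,f(x))$.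
   Context: A semicopula is a function $\mathrm{S}\colon[0,1]^2\to[0,1]$ that is non-decreasing in each coordinate and has neutral element $1$, i.e. $\mathrm{S}(x,1)=\mathrm{S}(1,x)=x$ for all $x\in[0,1]$. For a measurable space $(X,\mathcal{A})$ (with $X$ nonempty and $\mathcal{A}$ a $\sigma$-algebra), a capacity on $\mathcal{A}$ is a non-decreasing set function $\mu\colon\mathcal{A}\to[0,1]$ with $\mu(\emptyset)=0$ and $\mu(X)=1$; it is continuous from below if $\lim_{n\to\infty}\mu(A_n)=\mu\big(\bigcup_{k\ge1}A_k\big)$ whenever $A_1\subseteq A_2\subseteq\cdots$ are in $\mathcal{A}$. For a capacity $\mu$ and an $\mathcal{A}$-measurable $f\colon X\to[0,1]$, the generalized Sugeno integral is $$\mathbf{I}_{\mathrm{S}}(\mu,f)=\sup_{t\in[0,1]}\mathrm{S}\big(t,\mu(\{x\in X: f(x)\ge t\})\big).$$ *)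

theory Defs
  imports "HOL-Analysis.Analysis"
begin

definition semicopula :: "(real \<Rightarrow> real \<Rightarrow> real) \<Rightarrow> bool" where
  "semicopula S \<longleftrightarrow>
     (\<forall>x\<in>{0..1}. \<forall>y\<in>{0..1}. S x y \<in> {0..1}) \<and>
     (\<forall>x\<in>{0..1}. \<forall>x'\<in>{0..1}. \<forall>y\<in>{0..1}. x \<le> x' \<longrightarrow> S x y \<le> S x' y) \<and>
     (\<forall>x\<in>{0..1}. \<forall>y\<in>{0..1}. \<forall>y'\<in>{0..1}. y \<le> y' \<longrightarrow> S x y \<le> S x y') \<and>
     (\<forall>x\<in>{0..1}. S x 1 = x \<and> S 1 x = x)"

definition associative_on01 :: "(real \<Rightarrow> real \<Rightarrow> real) \<Rightarrow> bool" where
  "associative_on01 S \<longleftrightarrow>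
     (\<forall>x\<in>{0..1}. \<forall>y\<in>{0..1}. \<forall>z\<in>{0..1}. S (S x y) z = S x (S y z))"

definition capacity :: "'a measure \<Rightarrow> ('a set \<Rightarrow> real) \<Rightarrow> bool" where
  "capacity M \<mu> \<longleftrightarrow>
     (\<forall>A\<in>sets M. \<mu> A \<in> {0..1}) \<and>
     (\<forall>A\<in>sets M. \<forall>B\<in>sets M. A \<subseteq> B \<longrightarrow> \<mu> A \<le> \<mu> B) \<and>
     \<mu> {} = 0 \<and> \<mu> (space M) = 1"

definition continuous_from_below :: "'a measure \<Rightarrow> ('a set \<Rightarrow> real) \<Rightarrow> bool" where
  "continuous_from_below M \<mu> \<longleftrightarrow>
     (\<forall>A :: nat \<Rightarrow> 'a set. range A \<subseteq> sets M \<longrightarrow> incseq A \<longrightarrow>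
        (\<lambda>n. \<mu> (A n)) \<longlonglongrightarrow> \<mu> (\<Union>k. A k))"

definition gen_sugeno ::
  "(real \<Rightarrow> real \<Rightarrow> real) \<Rightarrow> 'a measure \<Rightarrow> ('a set \<Rightarrow> real) \<Rightarrow> ('a \<Rightarrow> real) \<Rightarrow> real" where
  "gen_sugeno S M \<mu> f = (SUP t\<in>{0..1}. S t (\<mu> {x \<in> space M. f x \<ge> t}))"

end

theory Submission
  imports Defs
begin

text \<open>
  Write \<open>I = \<^bold>I\<^sub>S(\<mu>, f)\<close> and \<open>\<mu>\<^sub>t = \<mu>{f \<ge> t}\<close>. Left-continuity of \<open>S(a,\<cdot>)\<close> at \<open>I\<close> lets \<open>S(a,\<cdot>)\<close>
  pass through the supremum, and associativity turns \<open>S(a, I)\<close> into \<open>R = sup\<^sub>t S(S(a,t), \<mu>\<^sub>t)\<close>.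
  On the other side, since \<open>S(a,\<cdot>)\<close> is increasing, every superlevel set \<open>{S(a,f) \<ge> s}\<close> is
  either empty, of the form \<open>{f \<ge> c}\<close>, or of the form \<open>{f > c}\<close> with \<open>S(a,c) < s\<close>. The first two
  cases contribute at most \<open>R\<close> directly; in the third, continuity of \<open>\<mu>\<close> from below writes
  \<open>\<mu>{f > c}\<close> as the limit of \<open>\<mu>{f \<ge> c + 1/n}\<close> and left-continuity of \<open>S(s,\<cdot>)\<close> passes the bound
  \<open>R\<close> to the limit. Strict monotonicity recovers each level set \<open>{f \<ge> t}\<close> as \<open>{S(a,f) \<ge> S(a,t)}\<close>,
  which gives the reverse inequality.
\<close>

lemma semicopula_range: "semicopula S \<Longrightarrow> x \<in> {0..1} \<Longrightarrow> y \<in> {0..1} \<Longrightarrow> S x y \<in> {0..1}"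
  unfolding semicopula_def by blast

lemma semicopula_mono_left:
  "semicopula S \<Longrightarrow> x \<in> {0..1} \<Longrightarrow> x' \<in> {0..1} \<Longrightarrow> y \<in> {0..1} \<Longrightarrow> x \<le> x' \<Longrightarrow> S x y \<le> S x' y"
  unfolding semicopula_def by blast

lemma semicopula_mono_right:
  "semicopula S \<Longrightarrow> x \<in> {0..1} \<Longrightarrow> y \<in> {0..1} \<Longrightarrow> y' \<in> {0..1} \<Longrightarrow> y \<le> y' \<Longrightarrow> S x y \<le> S x y'"
  unfolding semicopula_def by blast

lemma semicopula_one_right: "semicopula S \<Longrightarrow> x \<in> {0..1} \<Longrightarrow> S x 1 = x"
  unfolding semicopula_def by blast

lemma semicopula_one_left: "semicopula S \<Longrightarrow> x \<in> {0..1} \<Longrightarrow> S 1 x = x"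
  unfolding semicopula_def by blast

lemma semicopula_zero_right:
  assumes "semicopula S" "x \<in> {0..1}"
  shows "S x 0 = 0"
  using semicopula_mono_left[OF assms(1), of x 1 0] semicopula_one_left[OF assms(1), of 0]
    semicopula_range[OF assms(1), of x 0] assms(2) by auto

lemma semicopula_zero_left:
  assumes "semicopula S" "x \<in> {0..1}"
  shows "S 0 x = 0"
  using semicopula_mono_right[OF assms(1), of 0 x 1] semicopula_one_right[OF assms(1), of 0]
    semicopula_range[OF assms(1), of 0 x] assms(2) by auto

lemma capacity_range: "capacity M \<mu> \<Longrightarrow> A \<in> sets M \<Longrightarrow> \<mu> A \<in> {0..1}"
  unfolding capacity_def by blast

lemma capacity_mono: "capacity M \<mu> \<Longrightarrow> A \<in> sets M \<Longrightarrow> B \<in> sets M \<Longrightarrow> A \<subseteq> B \<Longrightarrow> \<mu> A \<le> \<mu> B"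
  unfolding capacity_def by blast

lemma capacity_empty: "capacity M \<mu> \<Longrightarrow> \<mu> {} = 0"
  unfolding capacity_def by blast

lemma superlevel_sets_ge: "(f :: 'a \<Rightarrow> real) \<in> borel_measurable M \<Longrightarrow> {x \<in> space M. t \<le> f x} \<in> sets M"
  by (simp add: borel_measurable_iff_ge)

lemma superlevel_sets_greater: "(f :: 'a \<Rightarrow> real) \<in> borel_measurable M \<Longrightarrow> {x \<in> space M. t < f x} \<in> sets M"
  by (simp add: borel_measurable_iff_greater)

lemma borel_measurable_mono_on_comp:
  fixes g :: "real \<Rightarrow> real"
  assumes "mono_on A g" "f \<in> borel_measurable M" "\<And>x. x \<in> space M \<Longrightarrow> f x \<in> A"
  shows "(\<lambda>x. g (f x)) \<in> borel_measurable M"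
  using measurable_comp[OF measurable_restrict_space2[OF _ assms(2)] borel_measurable_mono_on_fnc[OF assms(1)]]
    assms(3) by (auto simp: comp_def)

lemma continuous_from_below_superlevel_greater:
  assumes cfb: "continuous_from_below M \<mu>" and f: "f \<in> borel_measurable M"
  shows "(\<lambda>n. \<mu> {x \<in> space M. c + inverse (real (Suc n)) \<le> f x}) \<longlonglongrightarrow> \<mu> {x \<in> space M. c < f x}"
proof -
  define A where "A n = {x \<in> space M. c + inverse (real (Suc n)) \<le> f x}" for n
  have sets: "range A \<subseteq> sets M"
    unfolding A_def using superlevel_sets_ge[OF f] by blast
  have inc: "incseq A"
  proof (rule incseq_SucI)
    fix n
    have "inverse (real (Suc (Suc n))) \<le> inverse (real (Suc n))"
      by (rule le_imp_inverse_le) auto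
    then show "A n \<subseteq> A (Suc n)"
      unfolding A_def by (auto intro: order_trans[rotated])
  qed
  have union: "(\<Union>n. A n) = {x \<in> space M. c < f x}"
  proof (intro equalityI subsetI)
    fix x assume "x \<in> (\<Union>n. A n)"
    then obtain n where "x \<in> space M" "c + inverse (real (Suc n)) \<le> f x"
      unfolding A_def by blast
    moreover have "c < c + inverse (real (Suc n))"
      by simp
    ultimately show "x \<in> {x \<in> space M. c < f x}"
      using less_le_trans by blast
  next
    fix x assume "x \<in> {x \<in> space M. c < f x}"
    moreover obtain n where "inverse (real (Suc n)) < f x - c"
      using reals_Archimedean[of "f x - c"] calculation by auto
    ultimately show "x \<in> (\<Union>n. A n)"
      unfolding A_def by (auto intro!: exI[of _ n])
  qed
  have "(\<lambda>n. \<mu> (A n)) \<longlonglongrightarrow> \<mu> (\<Union>n. A n)"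
    using cfb sets inc unfolding continuous_from_below_def by blast
  then show ?thesis
    unfolding union unfolding A_def .
qed

lemma continuous_within_left_le_bound:
  fixes g :: "real \<Rightarrow> real"
  assumes cont: "continuous (at L within {0..L}) g"
    and approx: "\<And>d. d > 0 \<Longrightarrow> \<exists>y\<in>{0..L}. L - d < y \<and> g y \<le> R"
  shows "g L \<le> R"
proof (rule ccontr)
  assume "\<not> g L \<le> R"
  then have "g L - R > 0"
    by simp
  with cont obtain d where "d > 0"
    and d: "\<And>y. y \<in> {0..L} \<Longrightarrow> dist y L < d \<Longrightarrow> dist (g y) (g L) < g L - R"
    unfolding continuous_within_eps_delta by blast
  then obtain y where "y \<in> {0..L}" "L - d < y" "g y \<le> R"
    using approx by blast
  with d have "dist (g y) (g L) < g L - R"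
    by (auto simp: dist_real_def)
  with \<open>g y \<le> R\<close> show False
    by (simp add: dist_real_def)
qed

lemma mono_on_superlevel_cases:
  fixes g :: "real \<Rightarrow> real"
  assumes mono: "mono_on {0..1} g" and "s \<le> g 1"
  obtains (atLeast) c where "c \<in> {0..1}" "\<And>t. t \<in> {0..1} \<Longrightarrow> s \<le> g t \<longleftrightarrow> c \<le> t"
    | (greaterThan) c where "c \<in> {0..<1}" "g c < s" "\<And>t. t \<in> {0..1} \<Longrightarrow> s \<le> g t \<longleftrightarrow> c < t"
proof -
  define T where "T = {t \<in> {0..1}. s \<le> g t}"
  define c where "c = Inf T"
  have "1 \<in> T"
    using assms(2) by (simp add: T_def)
  have bdd: "bdd_below T"
    by (rule bdd_belowI[where m = 0]) (simp add: T_def)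
  have c_le: "c \<le> t" if "t \<in> {0..1}" "s \<le> g t" for t
    unfolding c_def by (rule cInf_lower[OF _ bdd]) (use that in \<open>simp add: T_def\<close>)
  have "0 \<le> c"
    unfolding c_def by (rule cInf_greatest) (use \<open>1 \<in> T\<close> in \<open>auto simp: T_def\<close>)
  then have c01: "c \<in> {0..1}"
    using c_le[of 1] assms(2) by simp
  have above_c: "s \<le> g t" if "t \<in> {0..1}" "c < t" for t
  proof -
    obtain u where "u \<in> T" "u < t"
      using cInf_less_iff[of T t] \<open>1 \<in> T\<close> bdd \<open>c < t\<close> unfolding c_def by auto
    then show ?thesis
      using mono_onD[OF mono, of u t] that unfolding T_def by auto
  qed
  show thesis
  proof (cases "s \<le> g c")
    case True
    have "s \<le> g t \<longleftrightarrow> c \<le> t" if "t \<in> {0..1}" for t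
      using c_le[OF that] mono_onD[OF mono c01 that] True by auto
    then show thesis
      by (rule atLeast[OF c01])
  next
    case False
    have iff: "s \<le> g t \<longleftrightarrow> c < t" if "t \<in> {0..1}" for t
    proof
      assume "s \<le> g t"
      with c_le[OF that] False show "c < t"
        by (cases "t = c") auto
    qed (rule above_c[OF that])
    have "c \<in> {0..<1}"
      using c01 False assms(2) by (cases "c = 1") auto
    then show thesis
      by (rule greaterThan[OF _ _ iff]) (use False in simp)
  qed
qed

lemma gen_sugeno_term_range:
  assumes "semicopula S" "capacity M \<mu>" "f \<in> borel_measurable M" "t \<in> {0..1}"
  shows "S t (\<mu> {x \<in> space M. t \<le> f x}) \<in> {0..1}"
  by (rule semicopula_range[OF assms(1,4) capacity_range[OF assms(2) superlevel_sets_ge[OF assms(3)]]])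

lemma bdd_above_gen_sugeno:
  assumes "semicopula S" "capacity M \<mu>" "f \<in> borel_measurable M"
  shows "bdd_above ((\<lambda>t. S t (\<mu> {x \<in> space M. t \<le> f x})) ` {0..1})"
  by (rule bdd_aboveI2[where M = 1]) (use gen_sugeno_term_range[OF assms] in simp)

lemma gen_sugeno_upper:
  assumes "semicopula S" "capacity M \<mu>" "f \<in> borel_measurable M" "t \<in> {0..1}"
  shows "S t (\<mu> {x \<in> space M. t \<le> f x}) \<le> gen_sugeno S M \<mu> f"
  unfolding gen_sugeno_def by (rule cSUP_upper[OF assms(4) bdd_above_gen_sugeno[OF assms(1-3)]])

lemma gen_sugeno_least:
  "(\<And>t. t \<in> {0..1} \<Longrightarrow> S t (\<mu> {x \<in> space M. t \<le> f x}) \<le> R) \<Longrightarrow> gen_sugeno S M \<mu> f \<le> R"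
  unfolding gen_sugeno_def by (rule cSUP_least) auto

lemma gen_sugeno_range:
  assumes "semicopula S" "capacity M \<mu>" "f \<in> borel_measurable M"
  shows "gen_sugeno S M \<mu> f \<in> {0..1}"
proof -
  have "0 \<le> gen_sugeno S M \<mu> f"
    using gen_sugeno_term_range[OF assms, of 0] gen_sugeno_upper[OF assms, of 0] by simp
  moreover have "gen_sugeno S M \<mu> f \<le> 1"
    by (rule gen_sugeno_least) (use gen_sugeno_term_range[OF assms] in simp)
  ultimately show ?thesis
    by simp
qed

lemma gen_sugeno_cong:
  assumes "\<And>x. x \<in> space M \<Longrightarrow> f x = g x"
  shows "gen_sugeno S M \<mu> f = gen_sugeno S M \<mu> g"
proof -
  have "{x \<in> space M. t \<le> f x} = {x \<in> space M. t \<le> g x}" for t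
    using assms by auto
  then show ?thesis
    unfolding gen_sugeno_def by simp
qed

lemma gen_sugeno_zero:
  assumes "semicopula S" "capacity M \<mu>"
  shows "gen_sugeno S M \<mu> (\<lambda>_. 0) = 0"
proof -
  have "S t (\<mu> {x \<in> space M. t \<le> 0}) = 0" if "t \<in> {0..1}" for t
  proof (cases "t = 0")
    case True
    then show ?thesis
      using semicopula_zero_left[OF assms(1) capacity_range[OF assms(2) sets.top]] by simp
  next
    case False
    then have empty: "{x \<in> space M. t \<le> 0} = {}"
      using that by auto
    show ?thesis
      unfolding empty using semicopula_zero_right[OF assms(1) that] capacity_empty[OF assms(2)] by simp
  qed
  then show ?thesis
    unfolding gen_sugeno_def by simp
qed

lemma scale_gen_sugeno_eq_SUP:
  assumes semi: "semicopula S" and cap: "capacity M \<mu>" and f: "f \<in> borel_measurable M"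
    and a: "a \<in> {0..1}"
    and leftcont: "\<And>x. x \<in> {0..1} \<Longrightarrow> continuous (at x within {0..x}) (S a)"
  shows "S a (gen_sugeno S M \<mu> f) = (SUP t\<in>{0..1}. S a (S t (\<mu> {x \<in> space M. t \<le> f x})))"
    (is "S a ?I = (SUP t\<in>{0..1}. S a (?h t))")
proof -
  have h01: "?h t \<in> {0..1}" if "t \<in> {0..1}" for t
    using gen_sugeno_term_range[OF semi cap f that] .
  have I01: "?I \<in> {0..1}"
    using gen_sugeno_range[OF semi cap f] .
  have upper: "?h t \<le> ?I" if "t \<in> {0..1}" for t
    using gen_sugeno_upper[OF semi cap f that] .
  have bdd: "bdd_above ((\<lambda>t. S a (?h t)) ` {0..1})"
    by (rule bdd_aboveI2[where M = 1]) (use semicopula_range[OF semi a h01] in simp)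
  show ?thesis
  proof (rule antisym)
    show "S a ?I \<le> (SUP t\<in>{0..1}. S a (?h t))"
    proof (rule continuous_within_left_le_bound[OF leftcont[OF I01]])
      fix d :: real assume "d > 0"
      then obtain t where t: "t \<in> {0..1}" "?I - d < ?h t"
        using less_cSUP_iff[of "{0..1::real}" ?h "?I - d"] bdd_above_gen_sugeno[OF semi cap f]
        unfolding gen_sugeno_def by auto
      moreover have "S a (?h t) \<le> (SUP t\<in>{0..1}. S a (?h t))"
        by (rule cSUP_upper[OF t(1) bdd])
      moreover have "?h t \<in> {0..?I}"
        using h01[OF t(1)] upper[OF t(1)] by simp
      ultimately show "\<exists>y\<in>{0..?I}. ?I - d < y \<and> S a y \<le> (SUP t\<in>{0..1}. S a (?h t))"
        by blast
    qed
    show "(SUP t\<in>{0..1}. S a (?h t)) \<le> S a ?I"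
    proof (rule cSUP_least)
      fix t :: real assume "t \<in> {0..1}"
      then show "S a (?h t) \<le> S a ?I"
        using semicopula_mono_right[OF semi a h01 I01 upper] by blast
    qed simp
  qed
qed

lemma superlevel_greater_bound:
  fixes f :: "'a \<Rightarrow> real"
  assumes semi: "semicopula S" and cap: "capacity M \<mu>" and cfb: "continuous_from_below M \<mu>"
    and f: "f \<in> borel_measurable M" and f01: "\<And>x. x \<in> space M \<Longrightarrow> f x \<in> {0..1}"
    and s: "s \<in> {0..1}"
    and leftcont: "\<And>x. x \<in> {0..1} \<Longrightarrow> continuous (at x within {0..x}) (S s)"
    and R_nonneg: "0 \<le> R"
    and bound: "\<And>u. u \<in> {c<..1} \<Longrightarrow> S s (\<mu> {x \<in> space M. u \<le> f x}) \<le> R"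
  shows "S s (\<mu> {x \<in> space M. c < f x}) \<le> R"
proof -
  define L where "L = \<mu> {x \<in> space M. c < f x}"
  define A where "A n = {x \<in> space M. c + inverse (real (Suc n)) \<le> f x}" for n
  have L01: "L \<in> {0..1}"
    unfolding L_def using capacity_range[OF cap superlevel_sets_greater[OF f]] .
  have A_le: "\<mu> (A n) \<in> {0..L}" for n
  proof -
    have "c < c + inverse (real (Suc n))"
      by simp
    then have "A n \<subseteq> {x \<in> space M. c < f x}"
      unfolding A_def using less_le_trans by blast
    then show ?thesis
      using capacity_mono[OF cap superlevel_sets_ge[OF f] superlevel_sets_greater[OF f]]
        capacity_range[OF cap superlevel_sets_ge[OF f]]
      unfolding A_def L_def by simp
  qed
  have A_bound: "S s (\<mu> (A n)) \<le> R" for n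
  proof (cases "c + inverse (real (Suc n)) \<le> 1")
    case True
    then show ?thesis
      using bound[of "c + inverse (real (Suc n))"] unfolding A_def by simp
  next
    case False
    then have "A n = {}"
      unfolding A_def using f01 by force
    then show ?thesis
      using semicopula_zero_right[OF semi s] capacity_empty[OF cap] R_nonneg by simp
  qed
  show ?thesis
    unfolding L_def[symmetric]
  proof (rule continuous_within_left_le_bound[OF leftcont[OF L01]])
    fix d :: real assume "d > 0"
    then obtain n where "norm (\<mu> (A n) - L) < d"
      using LIMSEQ_D[OF continuous_from_below_superlevel_greater[OF cfb f]]
      unfolding A_def L_def by blast
    then have "L - d < \<mu> (A n)"
      by simp
    then show "\<exists>y\<in>{0..L}. L - d < y \<and> S s y \<le> R"
      using A_le A_bound by blast
  qed
qed

lemma gen_sugeno_scale_superlevel_le: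
  assumes semi: "semicopula S" and cap: "capacity M \<mu>" and cfb: "continuous_from_below M \<mu>"
    and f: "f \<in> borel_measurable M" and f01: "\<And>x. x \<in> space M \<Longrightarrow> f x \<in> {0..1}"
    and a: "a \<in> {0<..<1}" and mono: "mono_on {0..1} (S a)"
    and leftcont: "\<And>s x. s \<in> {0<..<1} \<Longrightarrow> x \<in> {0..1} \<Longrightarrow> continuous (at x within {0..x}) (S s)"
    and s: "s \<in> {0..1}"
  shows "S s (\<mu> {x \<in> space M. s \<le> S a (f x)})
           \<le> (SUP t\<in>{0..1}. S (S a t) (\<mu> {x \<in> space M. t \<le> f x}))" (is "_ \<le> ?R")
proof -
  have a01: "a \<in> {0..1}" and Sa1: "S a 1 = a"
    using a semicopula_one_right[OF semi] by auto
  have mu01: "\<mu> {x \<in> space M. t \<le> f x} \<in> {0..1}" for t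
    using capacity_range[OF cap superlevel_sets_ge[OF f]] .
  have term01: "S (S a t) (\<mu> {x \<in> space M. t \<le> f x}) \<in> {0..1}" if "t \<in> {0..1}" for t
    using semicopula_range[OF semi semicopula_range[OF semi a01 that] mu01] .
  have R_upper: "S (S a t) (\<mu> {x \<in> space M. t \<le> f x}) \<le> ?R" if "t \<in> {0..1}" for t
    by (rule cSUP_upper[OF that], rule bdd_aboveI2[where M = 1]) (use term01 in simp)
  have R_nonneg: "0 \<le> ?R"
    using term01[of 0] R_upper[of 0] by simp
  have below_R: "S s (\<mu> {x \<in> space M. u \<le> f x}) \<le> ?R" if "u \<in> {0..1}" "s \<le> S a u" for u
    using semicopula_mono_left[OF semi s semicopula_range[OF semi a01 that(1)] mu01[of u] that(2)]
      R_upper[OF that(1)] by linarith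
  show ?thesis
  proof (cases "a < s")
    case True
    have "S a (f x) \<le> a" if "x \<in> space M" for x
      using mono_onD[OF mono, of "f x" 1] f01[OF that] Sa1 by auto
    then have empty: "{x \<in> space M. s \<le> S a (f x)} = {}"
      using True by force
    show ?thesis
      unfolding empty using semicopula_zero_right[OF semi s] capacity_empty[OF cap] R_nonneg by simp
  next
    case False
    then have "s \<le> S a 1"
      using Sa1 by simp
    with mono show ?thesis
    proof (cases rule: mono_on_superlevel_cases)
      case (atLeast c)
      then have level: "{x \<in> space M. s \<le> S a (f x)} = {x \<in> space M. c \<le> f x}"
        using f01 by blast
      show ?thesis
        unfolding level using below_R atLeast by simp
    next
      case (greaterThan c)
      then have level: "{x \<in> space M. s \<le> S a (f x)} = {x \<in> space M. c < f x}"
        using f01 by blast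
      have s_open: "s \<in> {0<..<1}"
        using greaterThan(1,2) False a semicopula_range[OF semi a01, of c] by auto
      have "S s (\<mu> {x \<in> space M. u \<le> f x}) \<le> ?R" if "u \<in> {c<..1}" for u
        using below_R[of u] greaterThan(1) greaterThan(3)[of u] that by auto
      from superlevel_greater_bound[OF semi cap cfb f f01 s leftcont[OF s_open] R_nonneg this]
      show ?thesis
        unfolding level .
    qed
  qed
qed

lemma gen_sugeno_scale_eq_SUP:
  assumes semi: "semicopula S" and cap: "capacity M \<mu>" and cfb: "continuous_from_below M \<mu>"
    and f: "f \<in> borel_measurable M" and f01: "\<And>x. x \<in> space M \<Longrightarrow> f x \<in> {0..1}"
    and a: "a \<in> {0<..<1}" and strict: "strict_mono_on {0..1} (S a)"
    and leftcont: "\<And>s x. s \<in> {0<..<1} \<Longrightarrow> x \<in> {0..1} \<Longrightarrow> continuous (at x within {0..x}) (S s)"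
  shows "gen_sugeno S M \<mu> (\<lambda>x. S a (f x)) = (SUP t\<in>{0..1}. S (S a t) (\<mu> {x \<in> space M. t \<le> f x}))"
proof (rule antisym)
  have mono: "mono_on {0..1} (S a)"
    using strict by (rule strict_mono_on_imp_mono_on)
  show "gen_sugeno S M \<mu> (\<lambda>x. S a (f x)) \<le> (SUP t\<in>{0..1}. S (S a t) (\<mu> {x \<in> space M. t \<le> f x}))"
    by (rule gen_sugeno_least, rule gen_sugeno_scale_superlevel_le[OF semi cap cfb f f01 a mono leftcont])
  have Sa_f: "(\<lambda>x. S a (f x)) \<in> borel_measurable M"
    using borel_measurable_mono_on_comp[OF mono f f01] .
  show "(SUP t\<in>{0..1}. S (S a t) (\<mu> {x \<in> space M. t \<le> f x})) \<le> gen_sugeno S M \<mu> (\<lambda>x. S a (f x))"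
  proof (rule cSUP_least)
    fix t :: real assume t: "t \<in> {0..1}"
    have "{x \<in> space M. t \<le> f x} = {x \<in> space M. S a t \<le> S a (f x)}"
      using strict_mono_on_less_eq[OF strict t] f01 by blast
    then show "S (S a t) (\<mu> {x \<in> space M. t \<le> f x}) \<le> gen_sugeno S M \<mu> (\<lambda>x. S a (f x))"
      using gen_sugeno_upper[OF semi cap Sa_f semicopula_range[OF semi _ t]] a by simp
  qed simp
qed

theorem theorem3:
  fixes S :: "real \<Rightarrow> real \<Rightarrow> real"
  assumes semi: "semicopula S"
    and assoc: "associative_on01 S"
    and strict: "\<And>a. a \<in> {0<..<1} \<Longrightarrow> strict_mono_on {0..1} (S a)"
    and leftcont: "\<And>a x. a \<in> {0<..<1} \<Longrightarrow> x \<in> {0..1} \<Longrightarrow>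
                      continuous (at x within {0..x}) (S a)"
    and isolated: "\<And>a z. a \<in> {0<..<1} \<Longrightarrow> z \<in> {0..1} \<Longrightarrow>
                      \<not> continuous (at z within {0..1}) (S a) \<Longrightarrow>
                      \<exists>\<epsilon>>0. continuous_on ({z<..<z+\<epsilon>} \<inter> {0..1}) (S a)"
  shows "\<forall>(M :: 'x measure) \<mu> f a.
           space M \<noteq> {} \<longrightarrow> capacity M \<mu> \<longrightarrow> continuous_from_below M \<mu> \<longrightarrow>
           f \<in> borel_measurable M \<longrightarrow> (\<forall>x\<in>space M. f x \<in> {0..1}) \<longrightarrow> a \<in> {0..1} \<longrightarrow>
           gen_sugeno S M \<mu> (\<lambda>x. S a (f x)) = S a (gen_sugeno S M \<mu> f)"
proof (intro allI impI)
  fix M :: "'x measure" and \<mu> :: "'x set \<Rightarrow> real" and f :: "'x \<Rightarrow> real" and a :: real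
  assume cap: "capacity M \<mu>" and cfb: "continuous_from_below M \<mu>" and f: "f \<in> borel_measurable M"
    and f01: "\<forall>x\<in>space M. f x \<in> {0..1}" and a: "a \<in> {0..1}"
  have I01: "gen_sugeno S M \<mu> f \<in> {0..1}"
    using gen_sugeno_range[OF semi cap f] .
  consider "a = 0" | "a = 1" | "a \<in> {0<..<1}"
    using a by fastforce
  then show "gen_sugeno S M \<mu> (\<lambda>x. S a (f x)) = S a (gen_sugeno S M \<mu> f)"
  proof cases
    case 1
    then have "gen_sugeno S M \<mu> (\<lambda>x. S a (f x)) = gen_sugeno S M \<mu> (\<lambda>_. 0)"
      using semicopula_zero_left[OF semi] f01 by (intro gen_sugeno_cong) simp
    then show ?thesis
      using gen_sugeno_zero[OF semi cap] semicopula_zero_left[OF semi I01] 1 by simp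
  next
    case 2
    then have "gen_sugeno S M \<mu> (\<lambda>x. S a (f x)) = gen_sugeno S M \<mu> f"
      using semicopula_one_left[OF semi] f01 by (intro gen_sugeno_cong) simp
    then show ?thesis
      using semicopula_one_left[OF semi I01] 2 by simp
  next
    case 3
    have "S a (gen_sugeno S M \<mu> f) = (SUP t\<in>{0..1}. S a (S t (\<mu> {x \<in> space M. t \<le> f x})))"
      using scale_gen_sugeno_eq_SUP[OF semi cap f a leftcont[OF 3]] .
    also have "\<dots> = (SUP t\<in>{0..1}. S (S a t) (\<mu> {x \<in> space M. t \<le> f x}))"
      using assoc a capacity_range[OF cap superlevel_sets_ge[OF f]]
      unfolding associative_on01_def by (intro SUP_cong) auto
    also have "\<dots> = gen_sugeno S M \<mu> (\<lambda>x. S a (f x))"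
      using gen_sugeno_scale_eq_SUP[OF semi cap cfb f _ 3 strict[OF 3] leftcont] f01 by simp
    finally show ?thesis
      by simp
  qed
qed

end
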